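(* Let $v$ be a typical weight and let $X$ be an initial space such that for every $f\in X$ and $0\le r<1$ the function $f_r(z)=f(rz)$ belongs to $X$, and $\sup_{0\le r<1}\|f_r\|_X\le C\|f\|_X$ for a constant $C$ independent of $f$. Let $T$ be an intrinsic operator on $\mathcal{H}(\mathbb{D})$ such that $Tf_r\in H_{v,0}$ for all $f\in X$ and all $0\le r<1$. If $T:X\to H_v$ is weakly compact, then $T:X\to H_{v,0}$ is bounded.
   Context: $\mathcal{H}(\mathbb{D})$ is the space of holomorphic functions on the unit disk $\mathbb{D}$ with the topology $\tau_{uc}$ of uniform convergence on compact subsets. A linear operator $T$ on $\mathcal{H}(\mathbb{D})$ is intrinsic if it maps $\tau_{uc}$-convergent sequences to $\tau_{uc}$-convergent sequences. An initial space is a Banach space $X\subset\mathcal{H}(\mathbb{D})$ containing the polynomials such that every sequence in the closed unit ball of $X$ has a subsequence converging in $\tau_{uc}$ to some function in $X$. A typical weight is a continuous radial $v:\mathbb{D}\to(0,1]$, non-increasing in $|z|$, with $v(z)\to0$ as $|z|\to1$. $H_v=\{f\in\mathcal{H}(\mathbb{D}):\sup_z v(z)|f(z)|<\infty\}$ with that supremum as norm, and $H_{v,0}=\{f:\lim_{|z|\to1}v(z)|f(z)|=0\}$. *)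

theory Defs
  imports "HOL-Analysis.Analysis"
begin

text \<open>Elements of H(D) are represented canonically as functions complex => complex
  that are holomorphic on the open unit disc and vanish outside it.\<close>

definition Hol :: "(complex \<Rightarrow> complex) set" where
  "Hol = {f. f holomorphic_on ball 0 1 \<and> (\<forall>z. z \<notin> ball 0 1 \<longrightarrow> f z = 0)}"

definition uc_conv :: "(nat \<Rightarrow> complex \<Rightarrow> complex) \<Rightarrow> (complex \<Rightarrow> complex) \<Rightarrow> bool" where
  "uc_conv fs f \<longleftrightarrow> (\<forall>K. compact K \<and> K \<subseteq> ball 0 1 \<longrightarrow> uniform_limit K fs f sequentially)"

definition lin_op_Hol :: "((complex \<Rightarrow> complex) \<Rightarrow> (complex \<Rightarrow> complex)) \<Rightarrow> bool" where
  "lin_op_Hol T \<longleftrightarrow> (\<forall>f\<in>Hol. T f \<in> Hol) \<and>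
     (\<forall>f\<in>Hol. \<forall>g\<in>Hol. \<forall>a b. T (\<lambda>z. a * f z + b * g z) = (\<lambda>z. a * T f z + b * T g z))"

definition intrinsic :: "((complex \<Rightarrow> complex) \<Rightarrow> (complex \<Rightarrow> complex)) \<Rightarrow> bool" where
  "intrinsic T \<longleftrightarrow> lin_op_Hol T \<and>
     (\<forall>fs f. (\<forall>n. fs n \<in> Hol) \<and> f \<in> Hol \<and> uc_conv fs f \<longrightarrow>
        (\<exists>g\<in>Hol. uc_conv (\<lambda>n. T (fs n)) g))"

definition banach_subspace :: "(complex \<Rightarrow> complex) set \<Rightarrow> ((complex \<Rightarrow> complex) \<Rightarrow> real) \<Rightarrow> bool" where
  "banach_subspace X N \<longleftrightarrow> X \<subseteq> Hol \<and> (\<lambda>z. 0) \<in> X \<and>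
     (\<forall>f\<in>X. \<forall>g\<in>X. \<forall>a b. (\<lambda>z. a * f z + b * g z) \<in> X) \<and>
     (\<forall>f\<in>X. N f \<ge> 0 \<and> (N f = 0 \<longleftrightarrow> f = (\<lambda>z. 0))) \<and>
     (\<forall>f\<in>X. \<forall>a. N (\<lambda>z. a * f z) = norm a * N f) \<and>
     (\<forall>f\<in>X. \<forall>g\<in>X. N (\<lambda>z. f z + g z) \<le> N f + N g) \<and>
     (\<forall>fs. (\<forall>n. fs n \<in> X) \<and> (\<forall>e>0. \<exists>M. \<forall>m\<ge>M. \<forall>n\<ge>M. N (\<lambda>z. fs m z - fs n z) < e) \<longrightarrow>
        (\<exists>f\<in>X. (\<lambda>n. N (\<lambda>z. fs n z - f z)) \<longlonglongrightarrow> 0))"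

definition poly_Hol :: "(complex \<Rightarrow> complex) set" where
  "poly_Hol = {p. \<exists>c :: nat \<Rightarrow> complex. \<exists>n.
      p = (\<lambda>z. if z \<in> ball 0 1 then (\<Sum>k\<le>n. c k * z ^ k) else 0)}"

definition initial_space :: "(complex \<Rightarrow> complex) set \<Rightarrow> ((complex \<Rightarrow> complex) \<Rightarrow> real) \<Rightarrow> bool" where
  "initial_space X N \<longleftrightarrow> banach_subspace X N \<and> poly_Hol \<subseteq> X \<and>
     (\<forall>fs. (\<forall>n. fs n \<in> X \<and> N (fs n) \<le> 1) \<longrightarrow>
        (\<exists>(r :: nat \<Rightarrow> nat) f. strict_mono r \<and> f \<in> X \<and> uc_conv (fs \<circ> r) f))"

definition typical_weight :: "(complex \<Rightarrow> real) \<Rightarrow> bool" where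
  "typical_weight v \<longleftrightarrow> continuous_on (ball 0 1) v \<and>
     (\<forall>z\<in>ball 0 1. 0 < v z \<and> v z \<le> 1) \<and>
     (\<forall>z\<in>ball 0 1. \<forall>w\<in>ball 0 1. norm z = norm w \<longrightarrow> v z = v w) \<and>
     (\<forall>z\<in>ball 0 1. \<forall>w\<in>ball 0 1. norm z \<le> norm w \<longrightarrow> v w \<le> v z) \<and>
     (\<forall>e>0. \<exists>d<1. \<forall>z\<in>ball 0 1. d < norm z \<longrightarrow> v z < e)"

definition Hv :: "(complex \<Rightarrow> real) \<Rightarrow> (complex \<Rightarrow> complex) set" where
  "Hv v = {f\<in>Hol. bdd_above ((\<lambda>z. v z * norm (f z)) ` ball 0 1)}"

definition Hv_norm :: "(complex \<Rightarrow> real) \<Rightarrow> (complex \<Rightarrow> complex) \<Rightarrow> real" where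
  "Hv_norm v f = (SUP z\<in>ball 0 1. v z * norm (f z))"

definition Hv0 :: "(complex \<Rightarrow> real) \<Rightarrow> (complex \<Rightarrow> complex) set" where
  "Hv0 v = {f\<in>Hol. \<forall>e>0. \<exists>d<1. \<forall>z\<in>ball 0 1. d < norm z \<longrightarrow> v z * norm (f z) < e}"

definition Hv_dual :: "(complex \<Rightarrow> real) \<Rightarrow> ((complex \<Rightarrow> complex) \<Rightarrow> complex) set" where
  "Hv_dual v = {\<phi>. (\<forall>f\<in>Hv v. \<forall>g\<in>Hv v. \<forall>a b. \<phi> (\<lambda>z. a * f z + b * g z) = a * \<phi> f + b * \<phi> g) \<and>
      (\<exists>c. \<forall>f\<in>Hv v. norm (\<phi> f) \<le> c * Hv_norm v f)}"

definition Hv_weak :: "(complex \<Rightarrow> real) \<Rightarrow> (complex \<Rightarrow> complex) topology" where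
  "Hv_weak v = topology_generated_by
     {{f\<in>Hv v. \<phi> f \<in> U} | \<phi> U. \<phi> \<in> Hv_dual v \<and> open U}"

definition weakly_compact_into_Hv ::
  "((complex \<Rightarrow> complex) \<Rightarrow> (complex \<Rightarrow> complex)) \<Rightarrow> (complex \<Rightarrow> complex) set \<Rightarrow>
   ((complex \<Rightarrow> complex) \<Rightarrow> real) \<Rightarrow> (complex \<Rightarrow> real) \<Rightarrow> bool" where
  "weakly_compact_into_Hv T X N v \<longleftrightarrow> T ` X \<subseteq> Hv v \<and>
     compactin (Hv_weak v) ((Hv_weak v) closure_of (T ` {f\<in>X. N f \<le> 1}))"

definition dilate :: "real \<Rightarrow> (complex \<Rightarrow> complex) \<Rightarrow> (complex \<Rightarrow> complex)" where
  "dilate r f = (\<lambda>z. if z \<in> ball 0 1 then f (of_real r * z) else 0)"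

end

theory Submission
  imports Defs
begin

text \<open>Let \<open>K\<close> be the weak closure of the image under \<open>T\<close> of the unit ball of \<open>X\<close>.
  For small \<open>f\<close>, the functions \<open>T f\<^sub>r\<close> lie in \<open>K \<inter> H\<^sub>v\<^sub>,\<^sub>0\<close>, and since \<open>f\<^sub>r \<rightarrow> f\<close> locally
  uniformly and \<open>T\<close> is intrinsic, they converge pointwise to \<open>T f\<close> as \<open>r \<rightarrow> 1\<close>. By weak
  compactness they have a weak cluster point, which equals \<open>T f\<close> because point evaluations
  are weakly continuous. If \<open>T f \<notin> H\<^sub>v\<^sub>,\<^sub>0\<close>, a Banach limit of weighted point evaluations
  along points where \<open>v |T f|\<close> stays large yields a functional on \<open>H\<^sub>v\<close> that vanishes on
  \<open>H\<^sub>v\<^sub>,\<^sub>0\<close> but not at \<open>T f\<close>, contradicting weak continuity. Boundedness follows because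
  weakly compact subsets of \<open>H\<^sub>v\<close> are norm bounded; in place of the uniform boundedness
  principle this is shown by a gliding hump.\<close>

section \<open>Cluster points and ultrafilter limits\<close>

lemma compactin_sequence_cluster_point:
  assumes "compactin W K" "\<And>n. h n \<in> K"
  obtains x where "x \<in> K"
    "\<And>V. openin W V \<Longrightarrow> x \<in> V \<Longrightarrow> frequently (\<lambda>n. h n \<in> V) sequentially"
proof -
  have "\<exists>x\<in>K. \<forall>V. openin W V \<and> x \<in> V \<longrightarrow> frequently (\<lambda>n. h n \<in> V) sequentially"
  proof (rule ccontr)
    assume "\<not> ?thesis"
    hence "\<forall>x\<in>K. \<exists>V. openin W V \<and> x \<in> V \<and> eventually (\<lambda>n. h n \<notin> V) sequentially"
      by (auto simp: not_frequently)
    then obtain nbhd where nbhd: "\<And>x. x \<in> K \<Longrightarrow>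
        openin W (nbhd x) \<and> x \<in> nbhd x \<and> eventually (\<lambda>n. h n \<notin> nbhd x) sequentially"
      by metis
    hence "\<forall>U\<in>nbhd ` K. openin W U" "K \<subseteq> \<Union>(nbhd ` K)" by auto
    then obtain F where F: "finite F" "F \<subseteq> nbhd ` K" "K \<subseteq> \<Union>F"
      using assms(1) unfolding compactin_def by meson
    have "\<forall>U\<in>F. eventually (\<lambda>n. h n \<notin> U) sequentially" using F(2) nbhd by blast
    hence "eventually (\<lambda>n. \<forall>U\<in>F. h n \<notin> U) sequentially"
      using F(1) by (simp add: eventually_ball_finite)
    then obtain n where "\<forall>U\<in>F. h n \<notin> U" by (auto simp: eventually_sequentially)
    thus False using F(3) assms(2)[of n] by blast
  qed
  thus thesis using that by blast
qed

lemma cluster_point_continuous_map_eq_limit: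
  fixes \<phi> :: "'a \<Rightarrow> 'b::t2_space"
  assumes cluster: "\<And>V. openin W V \<Longrightarrow> x \<in> V \<Longrightarrow> frequently (\<lambda>n. h n \<in> V) sequentially"
    and \<phi>: "continuous_map W euclidean \<phi>" and x: "x \<in> topspace W"
    and lim: "(\<lambda>n. \<phi> (h n)) \<longlonglongrightarrow> l"
  shows "\<phi> x = l"
proof (rule ccontr)
  assume "\<phi> x \<noteq> l"
  then obtain A B where AB: "open A" "open B" "\<phi> x \<in> A" "l \<in> B" "A \<inter> B = {}"
    by (metis hausdorff)
  have "openin W {y \<in> topspace W. \<phi> y \<in> A}"
    using \<phi> AB(1) by (simp add: continuous_map)
  hence "frequently (\<lambda>n. h n \<in> {y \<in> topspace W. \<phi> y \<in> A}) sequentially"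
    by (rule cluster) (use x AB(3) in simp)
  hence "frequently (\<lambda>n. \<phi> (h n) \<in> A) sequentially"
    by (rule frequently_elim1) simp
  moreover have "eventually (\<lambda>n. \<phi> (h n) \<in> B) sequentially"
    using lim AB(2,4) by (rule topological_tendstoD)
  ultimately have "frequently (\<lambda>n. \<phi> (h n) \<in> A \<and> \<phi> (h n) \<in> B) sequentially"
    by (rule frequently_eventually_frequently)
  thus False using AB(5) by (auto dest: frequently_ex)
qed

lemma ex_maximal_proper_filter_le:
  fixes F :: "'a filter"
  assumes "F \<noteq> bot"
  obtains U where "U \<noteq> bot" "U \<le> F" "\<And>G. G \<noteq> bot \<Longrightarrow> G \<le> U \<Longrightarrow> G = U"
proof -
  define R where "R = {(a, b). b \<noteq> bot \<and> b \<le> a \<and> a \<le> F}"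
  have FR: "Field R = {G. G \<noteq> bot \<and> G \<le> F}"
    unfolding R_def Field_def using assms by (auto simp: bot_unique intro: order_trans)
  have "\<exists>m\<in>Field R. \<forall>a\<in>Field R. (m, a) \<in> R \<longrightarrow> a = m"
  proof (rule Zorns_po_lemma)
    show "Partial_order R"
      by (auto simp: R_def partial_order_on_def preorder_on_def
          antisym_def refl_on_def trans_def Field_def bot_unique)
    show "\<exists>u\<in>Field R. \<forall>a\<in>C. (a, u) \<in> R" if C: "C \<in> Chains R" for C
    proof (cases "C = {}")
      case True thus ?thesis unfolding FR using assms by (intro bexI[of _ F]) auto
    next
      case False
      have chain: "\<forall>a\<in>C. \<forall>b\<in>C. a \<le> b \<or> b \<le> a"
        and proper: "\<forall>a\<in>C. a \<noteq> bot \<and> a \<le> F"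
        using C False unfolding Chains_def R_def by auto
      have "Inf C \<noteq> bot"
      proof
        assume "Inf C = bot"
        hence "eventually (\<lambda>_. False) (Inf C)" by simp
        hence "\<exists>b\<in>C. eventually (\<lambda>_. False) b"
          by (subst (asm) eventually_Inf_base) (use chain False in auto)
        thus False using proper by (auto simp: eventually_False)
      qed
      moreover have "Inf C \<le> F"
        using False proper by (meson Inf_lower all_not_in_conv order_trans)
      ultimately show ?thesis unfolding FR using proper
        by (intro bexI[of _ "Inf C"]) (auto simp: R_def Inf_lower)
    qed
  qed
  thus thesis using that unfolding FR by (auto simp: R_def)
qed

lemma ex_ultrafilter_le:
  assumes "F \<noteq> bot"
  obtains U where "U \<noteq> bot" "U \<le> F" "\<And>P. eventually P U \<or> eventually (\<lambda>x. \<not> P x) U"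
proof -
  obtain U where U: "U \<noteq> bot" "U \<le> F" and maximal: "\<And>G. G \<noteq> bot \<Longrightarrow> G \<le> U \<Longrightarrow> G = U"
    using ex_maximal_proper_filter_le[OF assms] by blast
  have "eventually P U \<or> eventually (\<lambda>x. \<not> P x) U" for P
  proof (rule disjCI)
    assume "\<not> eventually (\<lambda>x. \<not> P x) U"
    hence "inf U (principal {x. P x}) = U"
      by (intro maximal) (simp_all add: trivial_limit_def eventually_inf_principal)
    moreover have "eventually P (inf U (principal {x. P x}))"
      by (simp add: eventually_inf_principal)
    ultimately show "eventually P U" by simp
  qed
  with U show thesis using that by blast
qed

lemma ultrafilter_tendsto_Lim:
  fixes f :: "'a \<Rightarrow> 'b::t2_space"
  assumes U: "U \<noteq> bot" "\<And>P. eventually P U \<or> eventually (\<lambda>x. \<not> P x) U"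
    and S: "compact S" "\<And>x. f x \<in> S"
  shows "(f \<longlongrightarrow> Lim U f) U"
proof -
  have "filtermap f U \<noteq> bot" "eventually (\<lambda>y. y \<in> S) (filtermap f U)"
    using U(1) S(2) by (simp_all add: filtermap_bot_iff eventually_filtermap)
  then obtain l where l: "inf (nhds l) (filtermap f U) \<noteq> bot"
    using S(1) unfolding compact_filter by blast
  have "(f \<longlongrightarrow> l) U"
  proof (rule topological_tendstoI)
    fix A assume A: "open A" "l \<in> A"
    show "eventually (\<lambda>x. f x \<in> A) U"
    proof (rule ccontr)
      assume "\<not> eventually (\<lambda>x. f x \<in> A) U"
      hence "eventually (\<lambda>y. y \<notin> A) (filtermap f U)"
        using U(2) by (auto simp: eventually_filtermap)
      moreover have "eventually (\<lambda>y. y \<in> A) (nhds l)"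
        using A by (rule eventually_nhds_in_open)
      ultimately have "eventually (\<lambda>_. False) (inf (nhds l) (filtermap f U))"
        unfolding eventually_inf by blast
      with l show False by (simp add: trivial_limit_def)
    qed
  qed
  thus ?thesis using U(1) by (simp add: tendsto_Lim)
qed

section \<open>Dilations and intrinsic operators\<close>

lemma uc_conv_imp_tendsto:
  assumes "uc_conv fs f" "z \<in> ball 0 1"
  shows "(\<lambda>n. fs n z) \<longlonglongrightarrow> f z"
proof -
  have "compact {z}" "{z} \<subseteq> ball 0 1" using assms(2) by auto
  hence "uniform_limit {z} fs f sequentially"
    using assms(1) unfolding uc_conv_def by blast
  thus ?thesis by (rule tendsto_uniform_limitI) simp
qed

lemma uc_conv_interleave_limit:
  assumes "uc_conv fs f"
  shows "uc_conv (\<lambda>n. if even n then fs (n div 2) else f) f"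
  unfolding uc_conv_def uniform_limit_iff
proof (intro allI impI)
  fix K :: "complex set" and e :: real
  assume K: "compact K \<and> K \<subseteq> ball 0 1" and e: "e > 0"
  then obtain M where M: "\<And>n x. n \<ge> M \<Longrightarrow> x \<in> K \<Longrightarrow> dist (fs n x) (f x) < e"
    using assms unfolding uc_conv_def uniform_limit_iff eventually_sequentially by meson
  show "\<forall>\<^sub>F n in sequentially. \<forall>x\<in>K. dist ((if even n then fs (n div 2) else f) x) (f x) < e"
    unfolding eventually_sequentially
    using M e by (intro exI[of _ "2 * M"]) auto
qed

text \<open>Interleaving the sequence with its limit lets intrinsicality identify the limit of
  the images: the odd terms force it to be \<open>T f\<close>.\<close>

lemma intrinsic_tendsto_pointwise:
  assumes T: "intrinsic T" and f: "f \<in> Hol" and fs: "\<And>n. fs n \<in> Hol" and conv: "uc_conv fs f"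
    and z: "z \<in> ball 0 1"
  shows "(\<lambda>n. T (fs n) z) \<longlonglongrightarrow> T f z"
proof -
  define gs where "gs = (\<lambda>n. if even n then fs (n div 2) else f)"
  have "\<forall>n. gs n \<in> Hol" "uc_conv gs f"
    using f fs uc_conv_interleave_limit[OF conv] by (simp_all add: gs_def)
  then obtain g where "uc_conv (\<lambda>n. T (gs n)) g"
    using T f unfolding intrinsic_def by blast
  hence lim: "(\<lambda>n. T (gs n) z) \<longlonglongrightarrow> g z" using z by (rule uc_conv_imp_tendsto)
  have "(\<lambda>n. T (gs (2 * n + 1)) z) \<longlonglongrightarrow> g z"
    using LIMSEQ_subseq_LIMSEQ[OF lim, of "\<lambda>n. 2 * n + 1"] by (simp add: strict_mono_def o_def)
  hence "g z = T f z" by (simp add: gs_def LIMSEQ_const_iff)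
  moreover have "(\<lambda>n. T (gs (2 * n)) z) \<longlonglongrightarrow> g z"
    using LIMSEQ_subseq_LIMSEQ[OF lim, of "\<lambda>n. 2 * n"] by (simp add: strict_mono_def o_def)
  ultimately show ?thesis by (simp add: gs_def)
qed

lemma compact_subset_ball_imp_subset_cball:
  fixes K :: "'a::real_normed_vector set"
  assumes "compact K" "K \<subseteq> ball 0 1"
  obtains \<rho> where "\<rho> < 1" "K \<subseteq> cball 0 \<rho>"
proof (cases "K = {}")
  case True thus ?thesis using that[of 0] by auto
next
  case False
  then obtain z0 where "z0 \<in> K" "\<forall>z\<in>K. norm z \<le> norm z0"
    using assms(1) continuous_attains_sup[of K norm] by (auto intro: continuous_intros)
  thus ?thesis using that[of "norm z0"] assms(2) by (force simp: subset_iff)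
qed

lemma uc_conv_dilate:
  assumes f: "f \<in> Hol" and r: "r \<longlonglongrightarrow> 1" "\<And>n. 0 \<le> r n \<and> r n \<le> 1"
  shows "uc_conv (\<lambda>n. dilate (r n) f) f"
  unfolding uc_conv_def uniform_limit_iff
proof (intro allI impI)
  fix K :: "complex set" and e :: real
  assume K: "compact K \<and> K \<subseteq> ball 0 1" and e: "e > 0"
  obtain \<rho> where \<rho>: "\<rho> < 1" "K \<subseteq> cball 0 \<rho>"
    using compact_subset_ball_imp_subset_cball K by blast
  have "cball 0 \<rho> \<subseteq> ball (0::complex) 1" using \<rho>(1) by (simp add: cball_subset_ball_iff)
  hence "continuous_on (cball 0 \<rho>) f"
    using f unfolding Hol_def by (auto intro: holomorphic_on_imp_continuous_on holomorphic_on_subset)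
  hence "uniformly_continuous_on (cball 0 \<rho>) f"
    by (simp add: compact_uniformly_continuous)
  then obtain d where d: "d > 0"
    "\<And>x y. x \<in> cball 0 \<rho> \<Longrightarrow> y \<in> cball 0 \<rho> \<Longrightarrow> dist y x < d \<Longrightarrow> dist (f y) (f x) < e"
    using e unfolding uniformly_continuous_on_def by metis
  have "eventually (\<lambda>n. dist (r n) 1 < d) sequentially"
    using r(1) d(1) by (rule tendstoD)
  thus "\<forall>\<^sub>F n in sequentially. \<forall>x\<in>K. dist (dilate (r n) f x) (f x) < e"
  proof eventually_elim
    case (elim n)
    show ?case
    proof
      fix x assume x: "x \<in> K"
      have xb: "x \<in> ball 0 1" using x K by auto
      have "of_real (r n) * x - x = of_real (r n - 1) * x" by (simp add: algebra_simps)
      hence "dist (of_real (r n) * x) x = \<bar>r n - 1\<bar> * norm x"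
        by (simp only: dist_norm norm_mult norm_of_real)
      also have "\<dots> \<le> dist (r n) 1"
        using xb by (simp add: dist_real_def mult_left_le)
      finally have "dist (of_real (r n) * x) x < d" using elim by linarith
      moreover have "of_real (r n) * x \<in> cball 0 \<rho>" "x \<in> cball 0 \<rho>"
        using \<rho>(2) x r(2)[of n] mult_left_le_one_le[of "norm x" "r n"]
        by (auto simp: norm_mult)
      ultimately have "dist (f (of_real (r n) * x)) (f x) < e" using d(2) by blast
      thus "dist (dilate (r n) f x) (f x) < e" using xb by (simp add: dilate_def)
    qed
  qed
qed

lemma lin_op_Hol_scale:
  assumes "lin_op_Hol T" "f \<in> Hol"
  shows "T (\<lambda>z. a * f z) = (\<lambda>z. a * T f z)"
proof -
  have "T (\<lambda>z. a * f z + 0 * f z) = (\<lambda>z. a * T f z + 0 * T f z)"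
    using assms unfolding lin_op_Hol_def by blast
  thus ?thesis by simp
qed

lemma banach_subspace_scale:
  assumes "banach_subspace X N" "f \<in> X"
  shows "(\<lambda>z. a * f z) \<in> X" "N (\<lambda>z. a * f z) = norm a * N f"
proof -
  have "(\<lambda>z. a * f z + 0 * f z) \<in> X" using assms unfolding banach_subspace_def by blast
  thus "(\<lambda>z. a * f z) \<in> X" by simp
  show "N (\<lambda>z. a * f z) = norm a * N f" using assms unfolding banach_subspace_def by blast
qed

section \<open>Weighted spaces and their weak topology\<close>

lemma typical_weight_pos: "typical_weight v \<Longrightarrow> z \<in> ball 0 1 \<Longrightarrow> 0 < v z"
  unfolding typical_weight_def by blast

lemma Hv_norm_upper: "g \<in> Hv v \<Longrightarrow> z \<in> ball 0 1 \<Longrightarrow> v z * norm (g z) \<le> Hv_norm v g"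
  unfolding Hv_def Hv_norm_def by (auto intro: cSUP_upper)

lemma Hv_norm_nonneg:
  assumes "typical_weight v" "g \<in> Hv v"
  shows "0 \<le> Hv_norm v g"
proof -
  have "0 \<le> v 0 * norm (g 0)" using typical_weight_pos[OF assms(1), of 0] by simp
  also have "\<dots> \<le> Hv_norm v g" using Hv_norm_upper[OF assms(2), of 0] by simp
  finally show ?thesis .
qed

lemma less_Hv_norm_imp_ex: "g \<in> Hv v \<Longrightarrow> a < Hv_norm v g \<Longrightarrow> \<exists>z\<in>ball 0 1. a < v z * norm (g z)"
  unfolding Hv_def Hv_norm_def by (simp add: less_cSUP_iff)

lemma Hv_norm_scale_le:
  assumes "g \<in> Hv v"
  shows "Hv_norm v (\<lambda>z. a * g z) \<le> norm a * Hv_norm v g"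
  unfolding Hv_norm_def[of v "\<lambda>z. a * g z"]
proof (rule cSUP_least)
  fix z :: complex assume "z \<in> ball 0 1"
  hence "norm a * (v z * norm (g z)) \<le> norm a * Hv_norm v g"
    using Hv_norm_upper[OF assms] by (simp add: mult_left_mono)
  thus "v z * norm (a * g z) \<le> norm a * Hv_norm v g" by (simp add: norm_mult algebra_simps)
qed simp

lemma Hv0_scale:
  assumes "g \<in> Hv0 v"
  shows "(\<lambda>z. a * g z) \<in> Hv0 v"
proof -
  have "(\<lambda>z. a * g z) \<in> Hol" using assms by (auto simp: Hv0_def Hol_def holomorphic_on_mult)
  moreover have "\<exists>d<1. \<forall>z\<in>ball 0 1. d < norm z \<longrightarrow> v z * norm (a * g z) < e" if e: "e > 0" for e
  proof -
    have "e / (norm a + 1) > 0" using e by (simp add: add_nonneg_pos)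
    then obtain d where d: "d < 1"
        "\<And>z. z \<in> ball 0 1 \<Longrightarrow> d < norm z \<Longrightarrow> v z * norm (g z) < e / (norm a + 1)"
      using assms unfolding Hv0_def by blast
    have "v z * norm (a * g z) < e" if "z \<in> ball 0 1" "d < norm z" for z
    proof (cases "v z * norm (g z) \<le> 0")
      case True
      hence "norm a * (v z * norm (g z)) \<le> 0" by (simp add: mult_nonneg_nonpos)
      thus ?thesis using e by (simp add: norm_mult mult.left_commute)
    next
      case False
      hence "v z * norm (a * g z) \<le> (norm a + 1) * (v z * norm (g z))"
        by (simp add: norm_mult mult_right_mono algebra_simps)
      also have "\<dots> < (norm a + 1) * (e / (norm a + 1))"
        using d(2)[OF that] by (intro mult_strict_left_mono) (auto simp: add_nonneg_pos)
      also have "\<dots> = e"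
        using norm_ge_zero[of a] by (simp del: norm_ge_zero)
      finally show ?thesis .
    qed
    with d(1) show ?thesis by blast
  qed
  ultimately show ?thesis unfolding Hv0_def by blast
qed

lemma topspace_Hv_weak: "topspace (Hv_weak v) = Hv v"
proof -
  have "(\<lambda>_. 0) \<in> Hv_dual v" unfolding Hv_dual_def by (auto intro: exI[of _ 0])
  hence "{f\<in>Hv v. (\<lambda>_. 0::complex) f \<in> UNIV} \<in> {{f\<in>Hv v. \<phi> f \<in> U} | \<phi> U. \<phi> \<in> Hv_dual v \<and> open U}"
    by blast
  thus ?thesis unfolding Hv_weak_def by auto
qed

lemma continuous_map_Hv_dual:
  assumes "\<phi> \<in> Hv_dual v"
  shows "continuous_map (Hv_weak v) euclidean \<phi>"
  unfolding continuous_map topspace_Hv_weak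
proof (intro conjI allI impI)
  fix U :: "complex set" assume "openin euclidean U"
  hence "{f\<in>Hv v. \<phi> f \<in> U} \<in> {{f\<in>Hv v. \<phi> f \<in> U} | \<phi> U. \<phi> \<in> Hv_dual v \<and> open U}"
    using assms by auto
  thus "openin (Hv_weak v) {f \<in> Hv v. \<phi> f \<in> U}" unfolding Hv_weak_def
    by (rule topology_generated_by_Basis)
qed auto

lemma eval_in_Hv_dual:
  assumes "typical_weight v" "z \<in> ball 0 1"
  shows "(\<lambda>g. a * g z) \<in> Hv_dual v"
proof -
  have vz: "v z > 0" using assms typical_weight_pos by blast
  have "norm (a * g z) \<le> norm a / v z * Hv_norm v g" if "g \<in> Hv v" for g
  proof -
    have "norm (a * g z) = norm a / v z * (v z * norm (g z))" using vz by (simp add: norm_mult)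
    also have "\<dots> \<le> norm a / v z * Hv_norm v g"
      using Hv_norm_upper[OF that assms(2)] vz by (intro mult_left_mono) auto
    finally show ?thesis .
  qed
  thus ?thesis unfolding Hv_dual_def
    by (intro CollectI conjI exI[of _ "norm a / v z"]) (auto simp: algebra_simps)
qed

lemma compactin_Hv_weak_imp_bounded_dual:
  assumes "compactin (Hv_weak v) K" "\<phi> \<in> Hv_dual v"
  obtains R where "\<And>g. g \<in> K \<Longrightarrow> norm (\<phi> g) \<le> R"
proof -
  have "compact (\<phi> ` K)"
    using image_compactin[OF assms(1) continuous_map_Hv_dual[OF assms(2)]] by simp
  hence "bounded (\<phi> ` K)" by (rule compact_imp_bounded)
  thus thesis using that unfolding bounded_iff by blast
qed

section \<open>A functional annihilating \<open>H\<^sub>v\<^sub>,\<^sub>0\<close>\<close>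

lemma ultrafilter_Lim_in_Hv_dual:
  fixes \<psi> :: "nat \<Rightarrow> (complex \<Rightarrow> complex) \<Rightarrow> complex"
  assumes U: "U \<noteq> bot" "\<And>P. eventually P U \<or> eventually (\<lambda>k. \<not> P k) U"
    and lin: "\<And>k f g a b. f \<in> Hv v \<Longrightarrow> g \<in> Hv v \<Longrightarrow>
      \<psi> k (\<lambda>z. a * f z + b * g z) = a * \<psi> k f + b * \<psi> k g"
    and bound: "\<And>k g. g \<in> Hv v \<Longrightarrow> norm (\<psi> k g) \<le> c * Hv_norm v g"
  shows "(\<lambda>g. Lim U (\<lambda>k. \<psi> k g)) \<in> Hv_dual v"
proof -
  define L where "L g = Lim U (\<lambda>k. \<psi> k g)" for g
  have lim: "((\<lambda>k. \<psi> k g) \<longlongrightarrow> L g) U" if "g \<in> Hv v" for g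
    unfolding L_def using bound[OF that]
    by (intro ultrafilter_tendsto_Lim[OF U, of "cball 0 (c * Hv_norm v g)"]) auto
  have "L (\<lambda>z. a * f z + b * g z) = a * L f + b * L g" if "f \<in> Hv v" "g \<in> Hv v" for f g a b
  proof -
    have "((\<lambda>k. \<psi> k (\<lambda>z. a * f z + b * g z)) \<longlongrightarrow> a * L f + b * L g) U"
      using that by (simp add: lin) (intro tendsto_intros lim)
    thus ?thesis unfolding L_def using U(1) by (simp add: tendsto_Lim)
  qed
  moreover have "norm (L g) \<le> c * Hv_norm v g" if "g \<in> Hv v" for g
    using Lim_in_closed_set[OF closed_cball _ U(1) lim[OF that], of 0 "c * Hv_norm v g"] bound[OF that]
    by simp
  ultimately show ?thesis unfolding Hv_dual_def L_def by blast
qed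

lemma not_Hv0_imp_boundary_sequence:
  assumes "g \<in> Hol" "g \<notin> Hv0 v"
  obtains e z where "e > 0" "\<And>k. z k \<in> ball 0 1" "\<And>k. e \<le> v (z k) * norm (g (z k))"
    "\<And>d. d < 1 \<Longrightarrow> eventually (\<lambda>k. d < norm (z k)) sequentially"
proof -
  obtain e where e: "e > 0" "\<And>d. d < 1 \<Longrightarrow> \<exists>z\<in>ball 0 1. d < norm z \<and> e \<le> v z * norm (g z)"
    using assms unfolding Hv0_def by (auto simp: not_less) (meson not_le)
  have "\<exists>z\<in>ball 0 1. 1 - inverse (real (Suc k)) < norm z \<and> e \<le> v z * norm (g z)" for k
    by (rule e(2)) simp
  then obtain z where z: "\<And>k. z k \<in> ball 0 1" "\<And>k. 1 - inverse (real (Suc k)) < norm (z k)"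
    "\<And>k. e \<le> v (z k) * norm (g (z k))"
    by metis
  have "eventually (\<lambda>k. d < norm (z k)) sequentially" if "d < 1" for d
  proof -
    have "eventually (\<lambda>k. inverse (real (Suc k)) < 1 - d) sequentially"
      using LIMSEQ_inverse_real_of_nat that by (intro order_tendstoD) auto
    moreover have "d < norm (z k)" if "inverse (real (Suc k)) < 1 - d" for k
      using z(2)[of k] that by linarith
    ultimately show ?thesis by (rule eventually_mono)
  qed
  with e(1) z(1,3) show thesis by (rule that)
qed

lemma Hv0_tendsto_zero_along_boundary:
  assumes tw: "typical_weight v" and h: "h \<in> Hv0 v" and z: "\<And>k. z k \<in> ball 0 1"
    and boundary: "\<And>d. d < 1 \<Longrightarrow> eventually (\<lambda>k. d < norm (z k)) sequentially"
  shows "(\<lambda>k. v (z k) * norm (h (z k))) \<longlonglongrightarrow> 0"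
proof (rule tendstoI)
  fix r :: real assume "r > 0"
  then obtain d where d: "d < 1" "\<And>w. w \<in> ball 0 1 \<Longrightarrow> d < norm w \<Longrightarrow> v w * norm (h w) < r"
    using h unfolding Hv0_def by blast
  show "eventually (\<lambda>k. dist (v (z k) * norm (h (z k))) 0 < r) sequentially"
    using boundary[OF d(1)]
  proof (rule eventually_mono)
    fix k assume "d < norm (z k)"
    thus "dist (v (z k) * norm (h (z k))) 0 < r"
      using d(2)[OF z] typical_weight_pos[OF tw z[of k]] by simp
  qed
qed

lemma cnj_sgn_mult_self: "cnj (sgn w) * w = of_real (norm w)"
proof (cases "w = 0")
  case False
  have "cnj (sgn w) * w = (w * cnj w) / of_real (norm w)"
    by (simp add: complex_sgn_def scaleR_conv_of_real field_simps)
  also have "\<dots> = of_real (norm w)"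
    using False by (simp add: complex_norm_square[symmetric] power2_eq_square)
  finally show ?thesis .
qed simp

text \<open>\<open>L\<close> is a Banach limit of the point evaluations at a sequence tending to the boundary
  along which \<open>v |g|\<close> stays large, rotated so that they are positive at \<open>g\<close>.\<close>

lemma Hv_dual_annihilator_of_Hv0:
  assumes tw: "typical_weight v" and g: "g \<in> Hv v" "g \<notin> Hv0 v"
  obtains L where "L \<in> Hv_dual v" "\<And>h. h \<in> Hv0 v \<Longrightarrow> L h = 0" "L g \<noteq> 0"
proof -
  obtain e z where e: "e > 0" and z: "\<And>k. z k \<in> ball 0 1" "\<And>k. e \<le> v (z k) * norm (g (z k))"
    and boundary: "\<And>d. d < 1 \<Longrightarrow> eventually (\<lambda>k. d < norm (z k)) sequentially"
    using not_Hv0_imp_boundary_sequence[of g v] g by (auto simp: Hv_def)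
  obtain U :: "nat filter" where U: "U \<noteq> bot" "U \<le> sequentially"
    "\<And>P. eventually P U \<or> eventually (\<lambda>k. \<not> P k) U"
    using ex_ultrafilter_le[OF sequentially_bot] by blast
  define \<psi> where "\<psi> k h = of_real (v (z k)) * cnj (sgn (g (z k))) * h (z k)" for k h
  define L where "L h = Lim U (\<lambda>k. \<psi> k h)" for h
  have \<psi>_le: "norm (\<psi> k h) \<le> v (z k) * norm (h (z k))" for k h
  proof -
    have "0 < v (z k)" using typical_weight_pos[OF tw z(1)] .
    thus ?thesis by (simp add: \<psi>_def norm_mult norm_sgn)
  qed
  have \<psi>_Hv_norm: "norm (\<psi> k h) \<le> Hv_norm v h" if "h \<in> Hv v" for k h
    using order_trans[OF \<psi>_le[of k h] Hv_norm_upper[OF that z(1)]] .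
  have "L \<in> Hv_dual v" unfolding L_def
  proof (rule ultrafilter_Lim_in_Hv_dual[OF U(1,3), of _ _ 1])
    show "norm (\<psi> k h) \<le> 1 * Hv_norm v h" if "h \<in> Hv v" for k h
      using \<psi>_Hv_norm[OF that] by simp
  qed (simp add: \<psi>_def algebra_simps)
  moreover have "L h = 0" if h: "h \<in> Hv0 v" for h
  proof -
    have "(\<lambda>k. \<psi> k h) \<longlonglongrightarrow> 0"
      by (rule Lim_null_comparison[OF _ Hv0_tendsto_zero_along_boundary[OF tw h z(1) boundary]])
        (simp add: \<psi>_le)
    hence "((\<lambda>k. \<psi> k h) \<longlongrightarrow> 0) U" using U(2) by (rule tendsto_mono[rotated])
    thus ?thesis unfolding L_def using U(1) by (simp add: tendsto_Lim)
  qed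
  moreover have "e \<le> Re (L g)"
  proof -
    have "\<psi> k g = of_real (v (z k) * norm (g (z k)))" for k
      by (simp add: \<psi>_def cnj_sgn_mult_self mult.assoc)
    hence "\<forall>k. \<psi> k g \<in> {w. e \<le> Re w}" using z(2) by simp
    moreover have "((\<lambda>k. \<psi> k g) \<longlongrightarrow> L g) U"
      unfolding L_def
      by (intro ultrafilter_tendsto_Lim[OF U(1,3), of "cball 0 (Hv_norm v g)"])
        (use \<psi>_Hv_norm[OF g(1)] in auto)
    ultimately have "L g \<in> {w. e \<le> Re w}"
      by (intro Lim_in_closed_set[OF closed_halfspace_Re_ge _ U(1)]) auto
    thus ?thesis by simp
  qed
  ultimately show thesis using e by (intro that[of L]) auto
qed

lemma pointwise_limit_in_Hv0:
  assumes tw: "typical_weight v" and K: "compactin (Hv_weak v) K"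
    and h: "\<And>n. h n \<in> K \<inter> Hv0 v" and g: "g \<in> Hol"
    and conv: "\<And>z. z \<in> ball 0 1 \<Longrightarrow> (\<lambda>n. h n z) \<longlonglongrightarrow> g z"
  shows "g \<in> Hv0 v"
proof -
  have KHv: "K \<subseteq> Hv v" using compactin_subset_topspace[OF K] by (simp add: topspace_Hv_weak)
  obtain x where x: "x \<in> K"
    and cluster: "\<And>V. openin (Hv_weak v) V \<Longrightarrow> x \<in> V \<Longrightarrow> frequently (\<lambda>n. h n \<in> V) sequentially"
    using compactin_sequence_cluster_point[OF K] h by blast
  have x_top: "x \<in> topspace (Hv_weak v)" using x KHv by (auto simp: topspace_Hv_weak)
  have "x z = g z" for z
  proof (cases "z \<in> ball 0 1")
    case True
    have "(\<lambda>f. 1 * f z) x = g z"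
    proof (rule cluster_point_continuous_map_eq_limit[OF cluster _ x_top])
      show "continuous_map (Hv_weak v) euclidean (\<lambda>f. 1 * f z)"
        using continuous_map_Hv_dual[OF eval_in_Hv_dual[OF tw True]] .
      show "(\<lambda>n. 1 * h n z) \<longlonglongrightarrow> g z" using conv[OF True] by simp
    qed
    thus ?thesis by simp
  next
    case False
    thus ?thesis using g x KHv by (auto simp: Hol_def Hv_def)
  qed
  hence gx: "g = x" by auto
  show ?thesis
  proof (rule ccontr)
    assume "g \<notin> Hv0 v"
    then obtain L where L: "L \<in> Hv_dual v" "\<And>h. h \<in> Hv0 v \<Longrightarrow> L h = 0" "L g \<noteq> 0"
      using Hv_dual_annihilator_of_Hv0[OF tw] x KHv gx by blast
    have "L x = 0"
      using cluster_point_continuous_map_eq_limit[OF cluster continuous_map_Hv_dual[OF L(1)] x_top]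
        L(2) h by simp
    with L(3) gx show False by simp
  qed
qed

lemma intrinsic_image_in_Hv0_if_dilations:
  assumes tw: "typical_weight v" and T: "intrinsic T" and K: "compactin (Hv_weak v) K"
    and f: "f \<in> Hol"
    and dilations: "\<And>r. 0 \<le> r \<Longrightarrow> r < 1 \<Longrightarrow> dilate r f \<in> Hol \<and> T (dilate r f) \<in> K \<inter> Hv0 v"
  shows "T f \<in> Hv0 v"
proof -
  define r where "r n = 1 - inverse (real (Suc n))" for n
  have r_lim: "r \<longlonglongrightarrow> 1"
    unfolding r_def using LIMSEQ_inverse_real_of_nat_add_minus[of 1] by simp
  have r_range: "0 \<le> r n" "r n < 1" for n
    by (simp_all add: r_def field_simps)
  show ?thesis
  proof (rule pointwise_limit_in_Hv0[OF tw K])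
    show "T (dilate (r n) f) \<in> K \<inter> Hv0 v" for n using dilations r_range by blast
    show "T f \<in> Hol" using T f by (auto simp: intrinsic_def lin_op_Hol_def)
    show "(\<lambda>n. T (dilate (r n) f) z) \<longlonglongrightarrow> T f z" if "z \<in> ball 0 1" for z
      using dilations r_range uc_conv_dilate[OF f r_lim]
      by (intro intrinsic_tendsto_pointwise[OF T f _ _ that]) (auto simp: less_imp_le)
  qed
qed

section \<open>Weakly compact subsets of \<open>H\<^sub>v\<close> are bounded\<close>

lemma ex_seq_beyond_prefix_bound:
  fixes G :: "nat \<Rightarrow> (nat \<Rightarrow> 'a) \<Rightarrow> real" and \<mu> :: "'a \<Rightarrow> real"
  assumes unbounded: "\<And>B. \<exists>x. P x \<and> B < \<mu> x"
    and prefix: "\<And>k s s'. (\<And>j. j < k \<Longrightarrow> s j = s' j) \<Longrightarrow> G k s = G k s'"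
  obtains s where "\<And>k. P (s k)" "\<And>k. G k s < \<mu> (s k)"
proof -
  define pick where "pick k xs = (SOME x. P x \<and> G k (\<lambda>j. xs ! j) < \<mu> x)" for k xs
  define pre where "pre = rec_nat [] (\<lambda>k xs. xs @ [pick k xs])"
  have pre_0: "pre 0 = []" and pre_Suc: "pre (Suc k) = pre k @ [pick k (pre k)]" for k
    by (simp_all add: pre_def)
  have len: "length (pre k) = k" for k
    by (induction k) (simp_all add: pre_0 pre_Suc)
  define s where "s k = pre (Suc k) ! k" for k
  have s_pick: "s k = pick k (pre k)" for k
    by (simp add: s_def pre_Suc nth_append len)
  have pre_nth: "pre k ! j = s j" if "j < k" for j k
    using that
  proof (induction k)
    case (Suc k)
    thus ?case by (cases "j = k") (simp_all add: pre_Suc nth_append len s_pick)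
  qed simp
  have "P (s k) \<and> G k (\<lambda>j. pre k ! j) < \<mu> (s k)" for k
    unfolding s_pick pick_def by (rule someI_ex) (rule unbounded)
  moreover have "G k (\<lambda>j. pre k ! j) = G k s" for k
    by (rule prefix) (simp add: pre_nth)
  ultimately show thesis using that by auto
qed

lemma norm_suminf_ge_dominant_term:
  fixes t :: "nat \<Rightarrow> 'a::banach"
  assumes "summable t"
    and before: "\<And>j. j < k \<Longrightarrow> norm (t j) \<le> e j"
    and after: "\<And>j. k < j \<Longrightarrow> norm (t j) \<le> (1/2)^j"
    and dominant: "(\<Sum>j<k. e j) + B + 2 \<le> norm (t k)"
  shows "B \<le> norm (suminf t)"
proof -
  define u where "u j = (if j = k then 0 else t j)" for j
  define b where "b j = (if j < k then e j else 0) + (1/2::real)^j" for j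
  have u_le: "norm (u j) \<le> b j" for j
  proof (cases j k rule: linorder_cases)
    case less
    thus ?thesis using before[of j] by (simp add: u_def b_def add_increasing2)
  qed (use after[of j] in \<open>simp_all add: u_def b_def\<close>)
  have "(\<lambda>j. if j < k then e j else 0) sums (\<Sum>j<k. e j)"
    using sums_finite[of "{..<k}" "\<lambda>j. if j < k then e j else 0"] by simp
  hence b_sums: "b sums ((\<Sum>j<k. e j) + 2)"
    unfolding b_def using geometric_sums[of "1/2::real"] by (intro sums_add) auto
  have u_summable: "summable (\<lambda>j. norm (u j))"
    using sums_summable[OF b_sums] by (rule summable_comparison_test') (simp add: u_le)
  have "norm (suminf u) \<le> (\<Sum>j. norm (u j))"
    by (rule summable_norm[OF u_summable])
  also have "\<dots> \<le> suminf b"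
    by (rule suminf_le[OF u_le u_summable]) (use b_sums in \<open>simp add: sums_iff\<close>)
  also have "\<dots> = (\<Sum>j<k. e j) + 2"
    using b_sums by (simp add: sums_iff)
  finally have "norm (suminf u) \<le> (\<Sum>j<k. e j) + 2" .
  moreover have "suminf t = t k + suminf u"
  proof -
    have "(\<lambda>j. t j - (if j = k then t j else 0)) sums (suminf t - t k)"
      using summable_sums[OF assms(1)] sums_single[of k t] by (rule sums_diff)
    moreover have "(\<lambda>j. t j - (if j = k then t j else 0)) = u" by (auto simp: u_def)
    ultimately show ?thesis by (simp add: sums_iff)
  qed
  ultimately show ?thesis
    using dominant norm_triangle_ineq2[of "t k" "- suminf u"] by simp
qed

definition weighted_point_series ::
  "(complex \<Rightarrow> real) \<Rightarrow> (nat \<Rightarrow> real) \<Rightarrow> (nat \<Rightarrow> complex) \<Rightarrow> (complex \<Rightarrow> complex) \<Rightarrow> complex" where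
  "weighted_point_series v c w g = (\<Sum>j. of_real (c j * v (w j)) * g (w j))"

lemma weighted_point_term_le:
  assumes tw: "typical_weight v" and "w j \<in> ball 0 1" "0 \<le> c j" "c j \<le> (1/2)^j" "g \<in> Hv v"
  shows "norm (of_real (c j * v (w j)) * g (w j)) \<le> (1/2)^j * Hv_norm v g"
proof -
  have "0 < v (w j)" using typical_weight_pos[OF tw assms(2)] .
  hence "norm (of_real (c j * v (w j)) * g (w j)) = c j * (v (w j) * norm (g (w j)))"
    using assms(3) by (simp add: norm_mult abs_mult)
  also have "\<dots> \<le> (1/2)^j * Hv_norm v g"
    using assms(3-5) Hv_norm_upper[OF assms(5,2)] Hv_norm_nonneg[OF tw assms(5)] \<open>0 < v (w j)\<close>
    by (intro mult_mono) auto
  finally show ?thesis .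
qed

lemma weighted_point_series_summable:
  assumes tw: "typical_weight v" and "\<And>j. w j \<in> ball 0 1" "\<And>j. 0 \<le> c j \<and> c j \<le> (1/2)^j"
    and "g \<in> Hv v"
  shows "summable (\<lambda>j. norm (of_real (c j * v (w j)) * g (w j)))"
proof (rule summable_comparison_test')
  show "summable (\<lambda>j. (1/2::real)^j * Hv_norm v g)"
    by (intro summable_mult2 summable_geometric) simp
  show "norm (norm (of_real (c j * v (w j)) * g (w j))) \<le> (1/2)^j * Hv_norm v g" for j
    using weighted_point_term_le[of v w j c g, OF tw assms(2)[of j] _ _ assms(4)] assms(3)[of j] by simp
qed

lemma weighted_point_series_in_Hv_dual:
  assumes tw: "typical_weight v" and w: "\<And>j. w j \<in> ball 0 1" and c: "\<And>j. 0 \<le> c j \<and> c j \<le> (1/2)^j"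
  shows "weighted_point_series v c w \<in> Hv_dual v"
proof -
  let ?t = "\<lambda>g j. of_real (c j * v (w j)) * g (w j)"
  have summable: "summable (?t g)" if "g \<in> Hv v" for g
    using weighted_point_series_summable[OF tw w c that] by (rule summable_norm_cancel)
  have "weighted_point_series v c w (\<lambda>z. a * f z + b * g z)
      = a * weighted_point_series v c w f + b * weighted_point_series v c w g"
    if "f \<in> Hv v" "g \<in> Hv v" for f g a b
  proof -
    have "(\<lambda>j. ?t (\<lambda>z. a * f z + b * g z) j) = (\<lambda>j. a * ?t f j + b * ?t g j)"
      by (simp add: fun_eq_iff algebra_simps)
    moreover have "(\<lambda>j. a * ?t f j + b * ?t g j) sums (a * suminf (?t f) + b * suminf (?t g))"
      using that summable by (intro sums_add sums_mult summable_sums)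
    ultimately show ?thesis unfolding weighted_point_series_def by (simp add: sums_iff)
  qed
  moreover have "norm (weighted_point_series v c w g) \<le> 2 * Hv_norm v g" if g: "g \<in> Hv v" for g
  proof -
    have "norm (weighted_point_series v c w g) \<le> (\<Sum>j. norm (?t g j))"
      unfolding weighted_point_series_def
      by (rule summable_norm[OF weighted_point_series_summable[OF tw w c g]])
    also have "\<dots> \<le> (\<Sum>j. (1/2::real)^j * Hv_norm v g)"
    proof (rule suminf_le[OF _ weighted_point_series_summable[OF tw w c g]])
      show "norm (?t g j) \<le> (1/2)^j * Hv_norm v g" for j
        using weighted_point_term_le[of v w j c g, OF tw w[of j] _ _ g] c[of j] by blast
      show "summable (\<lambda>j. (1/2::real)^j * Hv_norm v g)"
        by (intro summable_mult2 summable_geometric) simp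
    qed
    also have "\<dots> = 2 * Hv_norm v g" by (simp add: suminf_mult2[symmetric] suminf_geometric)
    finally show ?thesis .
  qed
  ultimately show ?thesis unfolding Hv_dual_def by blast
qed

lemma weighted_point_series_gliding_hump:
  assumes tw: "typical_weight v"
    and s: "s k \<in> Hv v" and w: "\<And>j. w j \<in> ball 0 1" and c: "\<And>j. 0 \<le> c j \<and> c j \<le> (1/2)^j"
    and before: "\<And>j. j < k \<Longrightarrow> v (w j) * norm (s k (w j)) \<le> Bd j"
    and after: "\<And>j. k < j \<Longrightarrow> c j * Hv_norm v (s k) \<le> (1/2)^j"
    and peak: "(\<Sum>j<k. c j * Bd j) + real k + 2 \<le> c k * (v (w k) * norm (s k (w k)))"
  shows "real k \<le> norm (weighted_point_series v c w (s k))"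
  unfolding weighted_point_series_def
proof (rule norm_suminf_ge_dominant_term)
  let ?t = "\<lambda>j. of_real (c j * v (w j)) * s k (w j)"
  have norm_t: "norm (?t j) = c j * (v (w j) * norm (s k (w j)))" for j
    using c[of j] typical_weight_pos[OF tw w[of j]] by (simp add: norm_mult)
  show "summable ?t"
    using weighted_point_series_summable[OF tw w c s] by (rule summable_norm_cancel)
  show "norm (?t j) \<le> c j * Bd j" if "j < k" for j
    unfolding norm_t by (intro mult_left_mono) (use before[OF that] c[of j] in auto)
  show "norm (?t j) \<le> (1/2)^j" if "k < j" for j
  proof -
    have "norm (?t j) \<le> c j * Hv_norm v (s k)"
      unfolding norm_t by (intro mult_left_mono) (use Hv_norm_upper[OF s w[of j]] c[of j] in auto)
    with after[OF that] show ?thesis by linarith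
  qed
  show "(\<Sum>j<k. c j * Bd j) + real k + 2 \<le> norm (?t k)"
    unfolding norm_t by (rule peak)
qed

definition hump_weight :: "(nat \<Rightarrow> real) \<Rightarrow> nat \<Rightarrow> real" where
  "hump_weight m k = (1/2)^k / (1 + (\<Sum>j<k. m j))"

lemma hump_weight_bounds:
  assumes "\<And>j. 0 \<le> m j"
  shows "0 \<le> hump_weight m k \<and> hump_weight m k \<le> (1/2)^k"
  using sum_nonneg[of "{..<k}" m] assms by (simp add: hump_weight_def divide_le_eq)

lemma hump_weight_mult_le:
  assumes m: "\<And>j. 0 \<le> m j" and "k < j"
  shows "hump_weight m j * m k \<le> (1/2)^j"
proof -
  have "m k \<le> (\<Sum>i<j. m i)" using assms by (intro member_le_sum) auto
  hence "m k / (1 + (\<Sum>i<j. m i)) \<le> 1" using sum_nonneg[of "{..<j}" m] m by simp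
  hence "(1/2)^j * (m k / (1 + (\<Sum>i<j. m i))) \<le> (1/2::real)^j" by (rule mult_left_le) simp
  thus ?thesis by (simp add: hump_weight_def)
qed

lemma hump_weight_cong: "(\<And>j. j < k \<Longrightarrow> m j = m' j) \<Longrightarrow> hump_weight m k = hump_weight m' k"
  unfolding hump_weight_def by (auto intro!: sum.cong)

text \<open>The weight of the \<open>j\<close>-th term is fixed by the humps \<open>s 0, \<dots>, s (j - 1)\<close> and makes
  their contributions to later terms negligible; each new hump \<open>s k\<close> is then chosen large
  enough to dominate all earlier terms.\<close>

lemma ex_gliding_hump_sequence:
  fixes Bd :: "complex \<Rightarrow> real"
  assumes tw: "typical_weight v" and KHv: "K \<subseteq> Hv v"
    and unbounded: "\<And>B. \<exists>g\<in>K. B < Hv_norm v g"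
  obtains s w c where "\<And>k. s k \<in> K" "\<And>k. w k \<in> ball 0 1" "\<And>j. 0 \<le> c j \<and> c j \<le> (1/2)^j"
    "\<And>j k. k < j \<Longrightarrow> c j * Hv_norm v (s k) \<le> (1/2)^j"
    "\<And>k. (\<Sum>j<k. c j * Bd (w j)) + real k + 2 \<le> c k * (v (w k) * norm (s k (w k)))"
proof -
  define P where "P p \<longleftrightarrow> fst p \<in> K \<and> snd p \<in> ball 0 1 \<and>
    Hv_norm v (fst p) / 2 < v (snd p) * norm (fst p (snd p))" for p :: "(complex \<Rightarrow> complex) \<times> complex"
  define m where "m p j = Hv_norm v (fst (p j))" for p :: "nat \<Rightarrow> (complex \<Rightarrow> complex) \<times> complex" and j
  define G where "G k p = 2 * 2^k * (1 + (\<Sum>j<k. m p j))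
    * ((\<Sum>j<k. hump_weight (m p) j * Bd (snd (p j))) + real k + 2)" for k p
  have "\<exists>p. P p \<and> B < Hv_norm v (fst p)" for B
  proof -
    obtain g where g: "g \<in> K" "max 0 B < Hv_norm v g" using unbounded by blast
    then obtain z where "z \<in> ball 0 1" "Hv_norm v g / 2 < v z * norm (g z)"
      using less_Hv_norm_imp_ex[of g v "Hv_norm v g / 2"] KHv by force
    with g show ?thesis by (intro exI[of _ "(g, z)"]) (auto simp: P_def)
  qed
  moreover have "G k p = G k p'" if same: "\<And>j. j < k \<Longrightarrow> p j = p' j" for k p p'
  proof -
    have "hump_weight (m p) j = hump_weight (m p') j" if "j < k" for j
      using same that by (intro hump_weight_cong) (simp add: m_def)
    thus ?thesis unfolding G_def using same by (auto simp: m_def intro!: sum.cong)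
  qed
  ultimately obtain p where p: "\<And>k. P (p k)" "\<And>k. G k p < Hv_norm v (fst (p k))"
    using ex_seq_beyond_prefix_bound[of P "\<lambda>p. Hv_norm v (fst p)" G] by blast
  have m_nonneg: "0 \<le> m p k" for k
    using p(1) KHv Hv_norm_nonneg[OF tw] by (auto simp: m_def P_def)
  have sum_m_nonneg: "0 \<le> (\<Sum>j<k. m p j)" for k by (intro sum_nonneg m_nonneg)
  show thesis
  proof (rule that[of "\<lambda>k. fst (p k)" "\<lambda>k. snd (p k)" "hump_weight (m p)"])
    show "fst (p k) \<in> K" "snd (p k) \<in> ball 0 1" for k using p(1) by (auto simp: P_def)
    show "0 \<le> hump_weight (m p) j \<and> hump_weight (m p) j \<le> (1/2)^j" for j
      by (rule hump_weight_bounds[of "m p", OF m_nonneg])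
    show "hump_weight (m p) j * Hv_norm v (fst (p k)) \<le> (1/2)^j" if "k < j" for j k
      using hump_weight_mult_le[of "m p", OF m_nonneg that] by (simp add: m_def)
    show "(\<Sum>j<k. hump_weight (m p) j * Bd (snd (p j))) + real k + 2
        \<le> hump_weight (m p) k * (v (snd (p k)) * norm (fst (p k) (snd (p k))))" for k
    proof -
      have c: "0 \<le> hump_weight (m p) k" using hump_weight_bounds[of "m p", OF m_nonneg] by blast
      have "(\<Sum>j<k. hump_weight (m p) j * Bd (snd (p j))) + real k + 2 = hump_weight (m p) k * (G k p / 2)"
        using sum_m_nonneg[of k] by (simp add: G_def hump_weight_def power_one_over)
      also have "\<dots> \<le> hump_weight (m p) k * (Hv_norm v (fst (p k)) / 2)"
        using p(2)[of k] c by (intro mult_left_mono) auto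
      also have "\<dots> \<le> hump_weight (m p) k * (v (snd (p k)) * norm (fst (p k) (snd (p k))))"
        using p(1)[of k] c by (intro mult_left_mono) (auto simp: P_def)
      finally show ?thesis .
    qed
  qed
qed

lemma compactin_Hv_weak_imp_Hv_norm_bounded:
  assumes tw: "typical_weight v" and K: "compactin (Hv_weak v) K"
  obtains B where "\<And>g. g \<in> K \<Longrightarrow> Hv_norm v g \<le> B"
proof -
  have KHv: "K \<subseteq> Hv v" using compactin_subset_topspace[OF K] by (simp add: topspace_Hv_weak)
  have "\<exists>R. \<forall>g\<in>K. v z * norm (g z) \<le> R" if z: "z \<in> ball 0 1" for z
  proof -
    obtain R where "\<And>g. g \<in> K \<Longrightarrow> norm (of_real (v z) * g z) \<le> R"
      using compactin_Hv_weak_imp_bounded_dual[OF K eval_in_Hv_dual[OF tw z]] by blast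
    thus ?thesis using typical_weight_pos[OF tw z] by (auto simp: norm_mult)
  qed
  then obtain Bd where Bd: "\<And>z g. z \<in> ball 0 1 \<Longrightarrow> g \<in> K \<Longrightarrow> v z * norm (g z) \<le> Bd z"
    by metis
  have "\<exists>B. \<forall>g\<in>K. Hv_norm v g \<le> B"
  proof (rule ccontr)
    assume "\<nexists>B. \<forall>g\<in>K. Hv_norm v g \<le> B"
    hence "\<And>B. \<exists>g\<in>K. B < Hv_norm v g" by (meson not_le)
    then obtain s w c where s: "\<And>k. s k \<in> K" and w: "\<And>k. w k \<in> ball 0 1"
      and c: "\<And>j. 0 \<le> c j \<and> c j \<le> (1/2)^j"
      and after: "\<And>j k. k < j \<Longrightarrow> c j * Hv_norm v (s k) \<le> (1/2)^j"
      and peak: "\<And>k. (\<Sum>j<k. c j * Bd (w j)) + real k + 2 \<le> c k * (v (w k) * norm (s k (w k)))"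
      using ex_gliding_hump_sequence[OF tw KHv, where Bd = Bd] by blast
    obtain R where R: "\<And>g. g \<in> K \<Longrightarrow> norm (weighted_point_series v c w g) \<le> R"
      using compactin_Hv_weak_imp_bounded_dual[OF K weighted_point_series_in_Hv_dual[of v w c, OF tw w c]]
      by blast
    obtain k :: nat where "R < real k" using reals_Archimedean2 by blast
    moreover have "real k \<le> norm (weighted_point_series v c w (s k))"
      using s KHv Bd w by (intro weighted_point_series_gliding_hump[OF tw _ w c _ after peak]) auto
    ultimately show False using R[OF s[of k]] by linarith
  qed
  thus thesis using that by blast
qed

section \<open>Reduction to small norms\<close>

lemma lin_op_Hv0_by_homogeneity:
  assumes X: "banach_subspace X N" and T: "lin_op_Hol T" and \<rho>: "\<rho> > 0"
    and small: "\<And>f. f \<in> X \<Longrightarrow> N f \<le> \<rho> \<Longrightarrow> T f \<in> Hv0 v"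
    and f: "f \<in> X"
  shows "T f \<in> Hv0 v"
proof -
  have N_f: "0 \<le> N f" and f_Hol: "f \<in> Hol" using X f by (auto simp: banach_subspace_def)
  define b where "b = \<rho> / (N f + 1)"
  have b: "b > 0" using \<rho> N_f by (simp add: b_def)
  have "N (\<lambda>z. of_real b * f z) = b * N f"
    using banach_subspace_scale(2)[OF X f, of "of_real b"] b by simp
  also have "\<dots> = \<rho> * (N f / (N f + 1))" by (simp add: b_def)
  also have "\<dots> \<le> \<rho>" using mult_left_le[of "N f / (N f + 1)" \<rho>] \<rho> N_f by simp
  finally have "T (\<lambda>z. of_real b * f z) \<in> Hv0 v"
    by (intro small banach_subspace_scale(1)[OF X f])
  hence "(\<lambda>z. of_real (1 / b) * (of_real b * T f z)) \<in> Hv0 v"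
    using Hv0_scale lin_op_Hol_scale[OF T f_Hol] by metis
  thus ?thesis using b by simp
qed

lemma lin_op_Hv_norm_by_homogeneity:
  assumes X: "banach_subspace X N" and T: "lin_op_Hol T"
    and unit: "\<And>f. f \<in> X \<Longrightarrow> N f \<le> 1 \<Longrightarrow> T f \<in> Hv v \<and> Hv_norm v (T f) \<le> B"
    and f: "f \<in> X"
  shows "Hv_norm v (T f) \<le> B * N f"
proof (cases "N f = 0")
  case True
  hence "f = (\<lambda>z. 0 * f z)" using X f by (simp add: banach_subspace_def)
  hence "T f = (\<lambda>z. 0)"
    using lin_op_Hol_scale[OF T, of f 0] X f by (auto simp: banach_subspace_def)
  thus ?thesis using True by (simp add: Hv_norm_def)
next
  case False
  moreover have "0 \<le> N f" using X f by (simp add: banach_subspace_def)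
  ultimately have N_f: "N f > 0" by simp
  define f' where "f' = (\<lambda>z. of_real (1 / N f) * f z)"
  have "f' \<in> X" "N f' = 1"
    using banach_subspace_scale[OF X f, of "of_real (1 / N f)"] N_f
    by (simp_all add: f'_def norm_divide)
  hence f': "T f' \<in> Hv v" "Hv_norm v (T f') \<le> B" using unit by auto
  have "f \<in> Hol" using X f by (auto simp: banach_subspace_def)
  hence "T f' = (\<lambda>z. of_real (1 / N f) * T f z)"
    unfolding f'_def by (rule lin_op_Hol_scale[OF T])
  hence "T f = (\<lambda>z. of_real (N f) * T f' z)" using N_f by (simp add: fun_eq_iff)
  hence "Hv_norm v (T f) \<le> N f * Hv_norm v (T f')"
    using Hv_norm_scale_le[OF f'(1), of "of_real (N f)"] N_f by simp
  also have "\<dots> \<le> B * N f" using f'(2) N_f by (simp add: mult.commute)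
  finally show ?thesis .
qed

theorem theorem3p3:
  fixes v :: "complex \<Rightarrow> real"
    and X :: "(complex \<Rightarrow> complex) set"
    and N :: "(complex \<Rightarrow> complex) \<Rightarrow> real"
    and T :: "(complex \<Rightarrow> complex) \<Rightarrow> (complex \<Rightarrow> complex)"
    and C :: real
  assumes "typical_weight v"
    and "initial_space X N"
    and "\<forall>f\<in>X. \<forall>r. 0 \<le> r \<and> r < 1 \<longrightarrow> dilate r f \<in> X \<and> N (dilate r f) \<le> C * N f"
    and "intrinsic T"
    and "\<forall>f\<in>X. \<forall>r. 0 \<le> r \<and> r < 1 \<longrightarrow> T (dilate r f) \<in> Hv0 v"
    and "weakly_compact_into_Hv T X N v"
  shows "(\<forall>f\<in>X. T f \<in> Hv0 v) \<and> (\<exists>M. \<forall>f\<in>X. Hv_norm v (T f) \<le> M * N f)"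
proof -
  note tw = assms(1)
  have X: "banach_subspace X N" and X_Hol: "X \<subseteq> Hol" and T: "lin_op_Hol T"
    using assms(2,4) by (auto simp: initial_space_def banach_subspace_def intrinsic_def)
  define S where "S = T ` {f\<in>X. N f \<le> 1}"
  define K where "K = Hv_weak v closure_of S"
  have K: "compactin (Hv_weak v) K" and S_Hv: "S \<subseteq> Hv v"
    using assms(6) by (auto simp: weakly_compact_into_Hv_def K_def S_def)
  have S_K: "S \<subseteq> K" unfolding K_def by (rule closure_of_subset) (simp add: topspace_Hv_weak S_Hv)
  have "T f \<in> Hv0 v" if f: "f \<in> X" and small: "N f \<le> 1 / max C 1" for f
  proof (rule intrinsic_image_in_Hv0_if_dilations[OF tw assms(4) K])
    have "C * N f \<le> max C 1 * N f" using X f by (intro mult_right_mono) (auto simp: banach_subspace_def)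
    also have "\<dots> \<le> 1" using small by (simp add: field_simps)
    finally show "dilate r f \<in> Hol \<and> T (dilate r f) \<in> K \<inter> Hv0 v" if "0 \<le> r" "r < 1" for r
      using assms(3,5) f that S_K X_Hol unfolding S_def by force
  qed (use f X_Hol in blast)
  hence "\<forall>f\<in>X. T f \<in> Hv0 v"
    using lin_op_Hv0_by_homogeneity[OF X T, of "1 / max C 1"] by auto
  moreover obtain B where "\<And>g. g \<in> K \<Longrightarrow> Hv_norm v g \<le> B"
    using compactin_Hv_weak_imp_Hv_norm_bounded[OF tw K] by blast
  hence "\<forall>f\<in>X. Hv_norm v (T f) \<le> B * N f"
    using S_K S_Hv by (intro ballI lin_op_Hv_norm_by_homogeneity[OF X T]) (auto simp: S_def)
  ultimately show ?thesis by blast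
qed

end
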